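(* Consider a time-invariant UMCO channel $\mathbf P(b_i|b_{i-1},a_i)$ on finite alphabets $\mathbb A,\mathbb B$. Let $\widetilde V_0\equiv0$ and, for $t\ge1$, $$\widetilde V_t(b_{-1})=\sup_{\pi(\cdot|b_{-1})}\sum_{a_0}\Big\{\sum_{b_0}\log\frac{\mathbf P(b_0|b_{-1},a_0)}{\mathbf P^{\pi}(b_0|b_{-1})}\mathbf P(b_0|b_{-1},a_0)+\sum_{b_0}\widetilde V_{t-1}(b_0)\mathbf P(b_0|b_{-1},a_0)\Big\}\pi(a_0|b_{-1}).$$ Assume there exist $V:\mathbb B\to\mathbb R$ and $J^*\in\mathbb R$ with $\lim_{t\to\infty}(\widetilde V_t(b_{-1})-tJ^* )=V(b_{-1})$ for all $b_{-1}\in\mathbb B$, and that there exist $\{\pi^{\infty,*}(\cdot|b_{-1})\}$ and the pair $(V,J^* )$ solving $$J^*+V(b_{-1})=\sup_{\pi(\cdot|b_{-1})}\sum_{a_0}\Big\{\sum_{b_0}\log\frac{\mathbf P(b_0|b_{-1},a_0)}{\mathbf P^{\pi}(b_0|b_{-1})}\mathbf P(b_0|b_{-1},a_0)+\sum_{b_0}V(b_0)\mathbf P(b_0|b_{-1},a_0)\Big\}\pi(a_0|b_{-1}).$$ Then for every initial distribution $\mu$ of $B_{-1}$, $$J^*=C^{FB,UMCO}_{A^\infty\to B^\infty}=\liminf_{n\to\infty}\frac1n\sup_{\pi^\infty}\mathbf E^{\pi^\infty}_\mu\Big[\sum_{i=0}^{n-1}\log\frac{\mathbf P(B_i|B_{i-1},A_i)}{\mathbf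 P^{\pi^\infty}(B_i|B_{i-1})}\Big],$$ and in particular this value does not depend on $\mu$.
   Context: Time-invariant UMCO channel: channel $\mathbf P(b_i|b_{i-1},a_i)$ on finite alphabets $\mathbb A,\mathbb B$, with the initial state $B_{-1}\sim\mu$. Input distributions $\pi^\infty(a_i|b_{i-1})$ (time-invariant), output transitions $\mathbf P^{\pi}(b_i|b_{i-1})=\sum_a\mathbf P(b_i|b_{i-1},a)\pi(a|b_{i-1})$. Logarithms base 2. *)

theory Defs
  imports "HOL-Analysis.Analysis"
begin

definition distr :: "('x::finite \<Rightarrow> real) \<Rightarrow> bool" where
  "distr d \<longleftrightarrow> (\<forall>x. 0 \<le> d x) \<and> sum d UNIV = 1"

text \<open>Channel P b' a b = P(b_i = b | b_{i-1} = b', a_i = a).\<close>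
definition channel :: "('b::finite \<Rightarrow> 'a::finite \<Rightarrow> 'b \<Rightarrow> real) \<Rightarrow> bool" where
  "channel P \<longleftrightarrow> (\<forall>b' a. distr (P b' a))"

text \<open>Time-invariant input distribution q a|b' written q b' a.\<close>
definition policy :: "('b::finite \<Rightarrow> 'a::finite \<Rightarrow> real) \<Rightarrow> bool" where
  "policy q \<longleftrightarrow> (\<forall>b'. distr (q b'))"

text \<open>Output transition P^q(b|b') induced by the distribution d = q(.|b').\<close>
definition Pout :: "('b::finite \<Rightarrow> 'a::finite \<Rightarrow> 'b \<Rightarrow> real) \<Rightarrow> ('a \<Rightarrow> real) \<Rightarrow> 'b \<Rightarrow> 'b \<Rightarrow> real" where
  "Pout P d b' b = (\<Sum>a\<in>UNIV. P b' a b * d a)"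

text \<open>The expression inside the supremum of the dynamic programming / ACOE equations.\<close>
definition stage :: "('b::finite \<Rightarrow> 'a::finite \<Rightarrow> 'b \<Rightarrow> real) \<Rightarrow> ('b \<Rightarrow> real) \<Rightarrow> 'b \<Rightarrow> ('a \<Rightarrow> real) \<Rightarrow> real" where
  "stage P W b' d =
     (\<Sum>a\<in>UNIV. ((\<Sum>b\<in>UNIV. log 2 (P b' a b / Pout P d b' b) * P b' a b)
                 + (\<Sum>b\<in>UNIV. W b * P b' a b)) * d a)"

primrec Vt :: "('b::finite \<Rightarrow> 'a::finite \<Rightarrow> 'b \<Rightarrow> real) \<Rightarrow> nat \<Rightarrow> 'b \<Rightarrow> real" where
  "Vt P 0 = (\<lambda>_. 0)"
| "Vt P (Suc t) = (\<lambda>b'. SUP d\<in>{d. distr d}. stage P (Vt P t) b' d)"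

text \<open>Joint probability of (B_{-1},A_0,B_0,...,A_{n-1},B_{n-1}); bs ! i stands for B_{i-1},
  as ! i for A_i.\<close>
definition path_prob :: "('b::finite \<Rightarrow> 'a::finite \<Rightarrow> 'b \<Rightarrow> real) \<Rightarrow> ('b \<Rightarrow> 'a \<Rightarrow> real)
    \<Rightarrow> ('b \<Rightarrow> real) \<Rightarrow> nat \<Rightarrow> 'b list \<Rightarrow> 'a list \<Rightarrow> real" where
  "path_prob P q mu n bs as =
     mu (bs ! 0) * (\<Prod>i<n. q (bs ! i) (as ! i) * P (bs ! i) (as ! i) (bs ! Suc i))"

definition exp_reward :: "('b::finite \<Rightarrow> 'a::finite \<Rightarrow> 'b \<Rightarrow> real) \<Rightarrow> ('b \<Rightarrow> 'a \<Rightarrow> real)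
    \<Rightarrow> ('b \<Rightarrow> real) \<Rightarrow> nat \<Rightarrow> real" where
  "exp_reward P q mu n =
     (\<Sum>bs\<in>{xs. length xs = Suc n}. \<Sum>as\<in>{xs. length xs = n}.
        path_prob P q mu n bs as *
        (\<Sum>i<n. log 2 (P (bs ! i) (as ! i) (bs ! Suc i) / Pout P (q (bs ! i)) (bs ! i) (bs ! Suc i))))"

definition C_FB_UMCO :: "('b::finite \<Rightarrow> 'a::finite \<Rightarrow> 'b \<Rightarrow> real) \<Rightarrow> ('b \<Rightarrow> real) \<Rightarrow> ereal" where
  "C_FB_UMCO P mu =
     liminf (\<lambda>n. ereal (1 / real n * (SUP q\<in>{q. policy q}. exp_reward P q mu n)))"

end

theory Submission
  imports Defs
begin

text \<open>The expected information reward of a stationary policy \<open>q\<close> over \<open>n\<close> steps is an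
  \<open>n\<close>-fold policy evaluation, and one evaluation step is exactly \<open>stage P W b (q b)\<close>.
  Since value iteration takes a supremum of this same step, every policy earns at most
  \<open>Vt P n\<close>, which grows like \<open>n J\<close> by hypothesis. Conversely, the policy attaining the
  average-cost optimality equation earns exactly \<open>n J + V\<close> when started from terminal value
  \<open>V\<close>, hence at least \<open>n J - 2 \<Sum>\<bar>V\<bar>\<close> from terminal value \<open>0\<close>. Dividing by \<open>n\<close>, the
  normalised optimal rewards converge to \<open>J\<close> for every initial distribution.\<close>

definition info_density :: "('b::finite \<Rightarrow> 'a::finite \<Rightarrow> 'b \<Rightarrow> real) \<Rightarrow> ('b \<Rightarrow> 'a \<Rightarrow> real)
    \<Rightarrow> 'b \<Rightarrow> 'a \<Rightarrow> 'b \<Rightarrow> real" where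
  "info_density P q b a c = log 2 (P b a c / Pout P (q b) b c)"

primrec policy_eval :: "('b::finite \<Rightarrow> 'a::finite \<Rightarrow> 'b \<Rightarrow> real) \<Rightarrow> ('b \<Rightarrow> 'a \<Rightarrow> real)
    \<Rightarrow> ('b \<Rightarrow> 'a \<Rightarrow> 'b \<Rightarrow> real) \<Rightarrow> nat \<Rightarrow> ('b \<Rightarrow> real) \<Rightarrow> 'b \<Rightarrow> real" where
  "policy_eval P q r 0 W b = W b"
| "policy_eval P q r (Suc n) W b =
     (\<Sum>a\<in>UNIV. q b a * (\<Sum>c\<in>UNIV. P b a c * (r b a c + policy_eval P q r n W c)))"

lemma distr_nonneg: "distr d \<Longrightarrow> 0 \<le> d x"
  by (simp add: distr_def)

lemma distr_sum_eq_1: "distr d \<Longrightarrow> (\<Sum>x\<in>UNIV. d x) = 1"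
  by (simp add: distr_def)

lemma channel_nonneg: "channel P \<Longrightarrow> 0 \<le> P b a c"
  by (simp add: channel_def distr_def)

lemma channel_sum_eq_1: "channel P \<Longrightarrow> (\<Sum>c\<in>UNIV. P b a c) = 1"
  by (simp add: channel_def distr_def)

lemma policy_nonneg: "policy q \<Longrightarrow> 0 \<le> q b a"
  by (simp add: policy_def distr_def)

lemma policy_sum_eq_1: "policy q \<Longrightarrow> (\<Sum>a\<in>UNIV. q b a) = 1"
  by (simp add: policy_def distr_def)

lemma policy_eval_Suc_eq_one:
  "policy_eval P q r (Suc n) W = policy_eval P q r (Suc 0) (policy_eval P q r n W)"
  by (rule ext) simp

lemma policy_eval_mono:
  assumes "channel P" "policy q" "\<And>c. W c \<le> W' c"
  shows "policy_eval P q r n W b \<le> policy_eval P q r n W' b"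
proof (induction n arbitrary: b)
  case 0
  show ?case using assms(3) by simp
next
  case (Suc n)
  show ?case
    using assms(1,2)
    by (simp, intro sum_mono mult_left_mono add_left_mono Suc.IH)
       (auto intro: channel_nonneg policy_nonneg)
qed

lemma policy_eval_add_const:
  assumes "channel P" "policy q"
  shows "policy_eval P q r n (\<lambda>c. W c + k) b = policy_eval P q r n W b + k"
proof (induction n arbitrary: b)
  case (Suc n)
  have "policy_eval P q r (Suc n) (\<lambda>c. W c + k) b
      = (\<Sum>a\<in>UNIV. q b a * ((\<Sum>c\<in>UNIV. P b a c * (r b a c + policy_eval P q r n W c))
                              + k * (\<Sum>c\<in>UNIV. P b a c)))"
    by (simp only: policy_eval.simps Suc.IH) (simp add: algebra_simps sum.distrib sum_distrib_left)
  also have "\<dots> = policy_eval P q r (Suc n) W b + k * (\<Sum>a\<in>UNIV. q b a)"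
    using assms(1) by (simp add: channel_sum_eq_1 algebra_simps sum.distrib sum_distrib_left)
  finally show ?case
    using assms(2) by (simp add: policy_sum_eq_1)
qed simp

lemma policy_eval_one_eq_stage:
  "policy_eval P q (info_density P q) (Suc 0) W b = stage P W b (q b)"
  unfolding stage_def info_density_def
  by (simp, intro sum.cong refl) (simp add: sum.distrib[symmetric] algebra_simps)

lemma policy_eval_stationary:
  assumes "channel P" "policy q" and acoe: "\<forall>b. J + V b = stage P V b (q b)"
  shows "policy_eval P q (info_density P q) n V b = real n * J + V b"
proof (induction n arbitrary: b)
  case (Suc n)
  have "policy_eval P q (info_density P q) (Suc n) V b
      = policy_eval P q (info_density P q) (Suc 0) (\<lambda>c. V c + real n * J) b"
    by (subst policy_eval_Suc_eq_one) (simp add: Suc.IH add.commute)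
  also have "\<dots> = stage P V b (q b) + real n * J"
    by (subst policy_eval_add_const[OF assms(1,2)]) (simp only: policy_eval_one_eq_stage)
  finally show ?case
    using acoe by (simp add: algebra_simps)
qed simp

lemma sum_lists_length_Suc:
  "(\<Sum>xs\<in>{xs::'x::finite list. length xs = Suc k}. f xs)
     = (\<Sum>x\<in>UNIV. \<Sum>xs\<in>{xs. length xs = k}. f (x # xs))"
proof -
  have lists: "{xs::'x list. length xs = Suc k} = (\<lambda>(x, xs). x # xs) ` (UNIV \<times> {xs. length xs = k})"
    by (auto simp: length_Suc_conv image_iff)
  have inj: "inj_on (\<lambda>(x, xs). x # xs) (UNIV \<times> {xs::'x list. length xs = k})"
    by (auto simp: inj_on_def)
  show ?thesis
    unfolding lists sum.reindex[OF inj] by (simp add: sum.cartesian_product split_beta)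
qed

lemma path_prob_Cons:
  "path_prob P q m (Suc n) (b # bs) (a # as) = path_prob P q (\<lambda>c. m b * q b a * P b a c) n bs as"
  unfolding path_prob_def prod.lessThan_Suc_shift by (simp add: mult.assoc)

text \<open>The initial weight \<open>m\<close> and the initial reward \<open>U\<close> are generalised so that peeling
  off the first step yields an instance of the induction hypothesis.\<close>
lemma path_sum_eq_policy_eval:
  assumes "channel P" "policy q"
  shows "(\<Sum>bs\<in>{xs. length xs = Suc n}. \<Sum>as\<in>{xs. length xs = n}.
      path_prob P q m n bs as * (U (bs ! 0) + (\<Sum>i<n. r (bs ! i) (as ! i) (bs ! Suc i)) + W (bs ! n)))
    = (\<Sum>b\<in>UNIV. m b * (U b + policy_eval P q r n W b))"
proof (induction n arbitrary: m U)
  case 0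
  have "{xs. length xs = 0} = {[]}" by auto
  then show ?case by (simp add: sum_lists_length_Suc path_prob_def)
next
  case (Suc n)
  have "(\<Sum>bs\<in>{xs. length xs = Suc (Suc n)}. \<Sum>as\<in>{xs. length xs = Suc n}.
      path_prob P q m (Suc n) bs as * (U (bs ! 0) + (\<Sum>i<Suc n. r (bs ! i) (as ! i) (bs ! Suc i)) + W (bs ! Suc n)))
    = (\<Sum>b\<in>UNIV. \<Sum>a\<in>UNIV. \<Sum>bs\<in>{xs. length xs = Suc n}. \<Sum>as\<in>{xs. length xs = n}.
      path_prob P q (\<lambda>c. m b * q b a * P b a c) n bs as
        * ((\<lambda>c. U b + r b a c) (bs ! 0) + (\<Sum>i<n. r (bs ! i) (as ! i) (bs ! Suc i)) + W (bs ! n)))"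
    by (subst sum_lists_length_Suc, subst sum_lists_length_Suc[where 'x = 'a],
        simp only: sum.lessThan_Suc_shift, simp add: path_prob_Cons add.assoc,
        intro sum.cong refl sum.swap)
  also have "\<dots> = (\<Sum>b\<in>UNIV. \<Sum>a\<in>UNIV. \<Sum>c\<in>UNIV.
      m b * q b a * P b a c * (U b + r b a c + policy_eval P q r n W c))"
    apply (intro sum.cong refl)
    subgoal for b a using Suc.IH[of "\<lambda>c. m b * q b a * P b a c" "\<lambda>c. U b + r b a c"] by simp
    done
  also have "\<dots> = (\<Sum>b\<in>UNIV. m b * (U b * (\<Sum>a\<in>UNIV. q b a * (\<Sum>c\<in>UNIV. P b a c))
      + policy_eval P q r (Suc n) W b))"
    by (simp add: sum_distrib_left sum.distrib algebra_simps)
  finally show ?case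
    using assms by (simp add: channel_sum_eq_1 policy_sum_eq_1)
qed

lemma exp_reward_eq_policy_eval:
  assumes "channel P" "policy q"
  shows "exp_reward P q mu n = (\<Sum>b\<in>UNIV. mu b * policy_eval P q (info_density P q) n (\<lambda>_. 0) b)"
  using path_sum_eq_policy_eval[OF assms, of mu n "\<lambda>_. 0" "info_density P q" "\<lambda>_. 0"]
  unfolding exp_reward_def info_density_def by simp

lemma log_ratio_mult_le:
  fixes p x s :: real
  assumes "0 < p" "0 < x" "p * x \<le> s"
  shows "log 2 (p / s) * x \<le> 1 / ln 2"
proof -
  have "0 < s" using mult_pos_pos[OF assms(1,2)] assms(3) by linarith
  then have "log 2 (p / s) \<le> log 2 (1 / x)"
    using assms by (intro log_mono) (auto simp: field_simps)
  then have "log 2 (p / s) * x \<le> log 2 (1 / x) * x"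
    using assms by (simp add: mult_right_mono)
  also have "\<dots> = ln (1 / x) * x / ln 2"
    by (simp add: log_def)
  also have "\<dots> \<le> (1 / x - 1) * x / ln 2"
    using ln_le_minus_one[of "1 / x"] assms by (intro divide_right_mono mult_right_mono) auto
  also have "\<dots> \<le> 1 / ln 2" using assms by (simp add: field_simps)
  finally show ?thesis .
qed

lemma info_term_le:
  assumes "channel P" "distr d"
  shows "log 2 (P b a c / Pout P d b c) * P b a c * d a \<le> P b a c / ln 2"
proof (cases "P b a c = 0 \<or> d a = 0")
  case False
  then have pos: "0 < P b a c" "0 < d a"
    using assms by (auto simp: order.strict_iff_order intro: distr_nonneg channel_nonneg)
  have "P b a c * d a \<le> Pout P d b c"
    unfolding Pout_def using assms
    by (intro member_le_sum[where f = "\<lambda>a. P b a c * d a"])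
       (auto intro: mult_nonneg_nonneg distr_nonneg channel_nonneg)
  from mult_right_mono[OF log_ratio_mult_le[OF pos this], of "P b a c"] pos
  show ?thesis by (simp add: algebra_simps)
qed (use channel_nonneg[OF assms(1), of b a c] in auto)

lemma stage_le:
  fixes P :: "'b::finite \<Rightarrow> 'a::finite \<Rightarrow> 'b \<Rightarrow> real"
  assumes "channel P" "distr d"
  shows "stage P W b d \<le> real CARD('a) / ln 2 + (\<Sum>c\<in>UNIV. \<bar>W c\<bar>)"
    (is "_ \<le> _ + ?S")
proof -
  have P0: "\<And>a c. 0 \<le> P b a c" and P1: "\<And>a. (\<Sum>c\<in>UNIV. P b a c) = 1"
    using assms(1) by (auto intro: channel_nonneg channel_sum_eq_1)
  have info: "(\<Sum>c\<in>UNIV. log 2 (P b a c / Pout P d b c) * P b a c) * d a \<le> 1 / ln 2" for a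
  proof -
    have "(\<Sum>c\<in>UNIV. log 2 (P b a c / Pout P d b c) * P b a c) * d a \<le> (\<Sum>c\<in>UNIV. P b a c / ln 2)"
      unfolding sum_distrib_right by (intro sum_mono info_term_le[OF assms])
    then show ?thesis using P1[of a] by (simp add: sum_divide_distrib[symmetric])
  qed
  have weighted: "(\<Sum>c\<in>UNIV. W c * P b a c) \<le> ?S" for a
  proof -
    have "\<And>c. W c \<le> ?S"
      by (rule order.trans[OF abs_ge_self member_le_sum[where f = "\<lambda>c. \<bar>W c\<bar>"]]) auto
    then have "(\<Sum>c\<in>UNIV. W c * P b a c) \<le> (\<Sum>c\<in>UNIV. ?S * P b a c)"
      by (intro sum_mono mult_right_mono P0)
    then show ?thesis using P1[of a] by (simp add: sum_distrib_left[symmetric])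
  qed
  have "stage P W b d = (\<Sum>a\<in>UNIV. (\<Sum>c\<in>UNIV. log 2 (P b a c / Pout P d b c) * P b a c) * d a
       + (\<Sum>c\<in>UNIV. W c * P b a c) * d a)"
    unfolding stage_def by (simp add: algebra_simps)
  also have "\<dots> \<le> (\<Sum>a\<in>UNIV. 1 / ln 2 + ?S * d a)"
    using assms(2) by (intro sum_mono add_mono info mult_right_mono weighted distr_nonneg)
  also have "\<dots> = real CARD('a) / ln 2 + ?S"
    using assms(2) by (simp add: sum.distrib sum_distrib_left[symmetric] distr_sum_eq_1)
  finally show ?thesis .
qed

lemma bdd_above_stage: "channel P \<Longrightarrow> bdd_above ((\<lambda>d. stage P W b d) ` {d. distr d})"
  using stage_le by (intro bdd_aboveI) blast

lemma policy_eval_le_Vt: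
  assumes "channel P" "policy q"
  shows "policy_eval P q (info_density P q) n (\<lambda>_. 0) b \<le> Vt P n b"
proof (induction n arbitrary: b)
  case (Suc n)
  have "policy_eval P q (info_density P q) (Suc n) (\<lambda>_. 0) b
      \<le> policy_eval P q (info_density P q) (Suc 0) (Vt P n) b"
    by (subst policy_eval_Suc_eq_one) (intro policy_eval_mono[OF assms] Suc.IH)
  also have "\<dots> \<le> Vt P (Suc n) b"
    unfolding policy_eval_one_eq_stage
    using assms by (simp, intro cSUP_upper bdd_above_stage) (auto simp: policy_def)
  finally show ?case .
qed simp

lemma exp_reward_le_Vt:
  assumes "channel P" "policy q" "distr mu"
  shows "exp_reward P q mu n \<le> (\<Sum>b\<in>UNIV. mu b * Vt P n b)"
  unfolding exp_reward_eq_policy_eval[OF assms(1,2)]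
  using assms by (intro sum_mono mult_left_mono policy_eval_le_Vt distr_nonneg)

lemma exp_reward_stationary_ge:
  assumes "channel P" "policy q" "distr mu" "\<forall>b. J + V b = stage P V b (q b)"
  shows "real n * J - 2 * (\<Sum>c\<in>UNIV. \<bar>V c\<bar>) \<le> exp_reward P q mu n"
proof -
  define M where "M = (\<Sum>c\<in>UNIV. \<bar>V c\<bar>)"
  have VM: "\<bar>V c\<bar> \<le> M" for c
    unfolding M_def by (rule member_le_sum[where f = "\<lambda>c. \<bar>V c\<bar>"]) auto
  have "real n * J - 2 * M \<le> policy_eval P q (info_density P q) n (\<lambda>_. 0) b" for b
  proof -
    have "policy_eval P q (info_density P q) n V b \<le> policy_eval P q (info_density P q) n (\<lambda>_. 0 + M) b"
      using VM by (intro policy_eval_mono[OF assms(1,2)]) (auto simp: abs_le_iff)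
    then show ?thesis
      unfolding policy_eval_add_const[OF assms(1,2)] policy_eval_stationary[OF assms(1,2,4)]
      using VM[of b] by (auto simp: abs_le_iff)
  qed
  then have "(\<Sum>b\<in>UNIV. mu b * (real n * J - 2 * M)) \<le> exp_reward P q mu n"
    unfolding exp_reward_eq_policy_eval[OF assms(1,2)]
    using assms(3) by (intro sum_mono mult_left_mono distr_nonneg)
  then show ?thesis
    using assms(3) by (simp add: sum_distrib_right[symmetric] distr_sum_eq_1 M_def)
qed

lemma averaged_growth_rate:
  fixes f :: "nat \<Rightarrow> 'b::finite \<Rightarrow> real"
  assumes "distr mu" "\<forall>b. (\<lambda>t. f t b - real t * J) \<longlonglongrightarrow> V b"
  shows "(\<lambda>t. (\<Sum>b\<in>UNIV. mu b * f t b) / real t) \<longlonglongrightarrow> J"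
proof -
  have lim: "(\<lambda>t. (\<Sum>b\<in>UNIV. mu b * (f t b - real t * J)) * inverse (real t) + J)
      \<longlonglongrightarrow> (\<Sum>b\<in>UNIV. mu b * V b) * 0 + J"
    using assms(2) by (intro tendsto_intros lim_inverse_n) auto
  have "(\<Sum>b\<in>UNIV. mu b * (f t b - real t * J)) * inverse (real t) + J
      = (\<Sum>b\<in>UNIV. mu b * f t b) / real t" if "1 \<le> t" for t
  proof -
    have "(\<Sum>b\<in>UNIV. mu b * (f t b - real t * J))
        = (\<Sum>b\<in>UNIV. mu b * f t b) - (\<Sum>b\<in>UNIV. mu b) * (real t * J)"
      by (simp add: right_diff_distrib sum_subtractf sum_distrib_right)
    then show ?thesis
      using that assms(1) by (simp add: distr_sum_eq_1 field_simps)
  qed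
  then have "\<forall>\<^sub>F t in sequentially. (\<Sum>b\<in>UNIV. mu b * (f t b - real t * J)) * inverse (real t) + J
      = (\<Sum>b\<in>UNIV. mu b * f t b) / real t"
    by (rule eventually_sequentiallyI)
  from Lim_transform_eventually[OF lim this] show ?thesis by simp
qed

lemma tendsto_div_sandwich:
  fixes s u :: "nat \<Rightarrow> real"
  assumes "\<And>n. real n * J - C \<le> s n" "\<And>n. s n \<le> u n" "(\<lambda>n. u n / real n) \<longlonglongrightarrow> J"
  shows "(\<lambda>n. s n / real n) \<longlonglongrightarrow> J"
proof (rule tendsto_sandwich[OF _ _ _ assms(3)])
  show "(\<lambda>n. J - C * inverse (real n)) \<longlonglongrightarrow> J"
    using tendsto_diff[OF tendsto_const tendsto_mult[OF tendsto_const lim_inverse_n]] by simp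
  have "J - C * inverse (real n) \<le> s n / real n" if "1 \<le> n" for n
    using divide_right_mono[OF assms(1)[of n], of "real n"] that by (simp add: field_simps)
  then show "\<forall>\<^sub>F n in sequentially. J - C * inverse (real n) \<le> s n / real n"
    by (rule eventually_sequentiallyI)
  show "\<forall>\<^sub>F n in sequentially. s n / real n \<le> u n / real n"
    using assms(2) by (intro always_eventually allI divide_right_mono) auto
qed

theorem mainTheorem6:
  fixes P :: "'b::finite \<Rightarrow> 'a::finite \<Rightarrow> 'b \<Rightarrow> real"
    and V :: "'b \<Rightarrow> real" and J :: real
    and pis :: "'b \<Rightarrow> 'a \<Rightarrow> real" and mu :: "'b \<Rightarrow> real"
  assumes "channel P"
    and "\<forall>b. (\<lambda>t. Vt P t b - real t * J) \<longlonglongrightarrow> V b"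
    and "policy pis"
    and "\<forall>b. J + V b = (SUP d\<in>{d. distr d}. stage P V b d)"
    and "\<forall>b. J + V b = stage P V b (pis b)"
    and "distr mu"
  shows "ereal J = C_FB_UMCO P mu"
proof -
  \<comment> \<open>The supremum form of the optimality equation (assumption 4) is not needed: value iteration
    gives the upper bound and the stationary policy \<open>pis\<close> the lower bound.\<close>
  define s where "s n = (SUP q\<in>{q. policy q}. exp_reward P q mu n)" for n
  have bdd: "bdd_above ((\<lambda>q. exp_reward P q mu n) ` {q. policy q})" for n
    using exp_reward_le_Vt[OF assms(1) _ assms(6)] by (intro bdd_aboveI) blast
  have "(\<lambda>n. s n / real n) \<longlonglongrightarrow> J"
  proof (rule tendsto_div_sandwich)
    show "real n * J - 2 * (\<Sum>c\<in>UNIV. \<bar>V c\<bar>) \<le> s n" for n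
      unfolding s_def using assms(3)
      by (intro order.trans[OF exp_reward_stationary_ge[OF assms(1,3,6,5)] cSUP_upper[OF _ bdd]]) auto
    show "s n \<le> (\<Sum>b\<in>UNIV. mu b * Vt P n b)" for n
      unfolding s_def using assms(3) by (intro cSUP_least exp_reward_le_Vt[OF assms(1) _ assms(6)]) auto
    show "(\<lambda>n. (\<Sum>b\<in>UNIV. mu b * Vt P n b) / real n) \<longlonglongrightarrow> J"
      using averaged_growth_rate[OF assms(6,2)] .
  qed
  then have "liminf (\<lambda>n. ereal (s n / real n)) = ereal J"
    by (intro lim_imp_Liminf) auto
  then show ?thesis
    unfolding C_FB_UMCO_def s_def by simp
qed

end
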